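(* Let $\theta>0$ and $\mu\in(0,\theta^{-1})$, and consider the system $$\dot c=D\left(\begin{bmatrix}1+\theta\\1-\mu\theta\end{bmatrix}-c\right)+\begin{bmatrix}-1\\ \mu\end{bmatrix}\theta c_1c_2^2,\qquad c=(c_1,c_2)'\in\operatorname{int}(\mathbb{R}_+^2),\ D\in[0,D_{\max}].$$ If $D_{\max}>(1+\mu)^2$ and $D_{\max}>\frac{(1+\mu)(\theta(1+\mu)^2+1)}{\mu\theta}$, then there exists a smooth feedback $\tilde k:\operatorname{int}(\mathbb{R}_+^2)\to[0,D_{\max}]$ with $\tilde k(1,1)=1$ such that the equilibrium $(1,1)'$ is uniformly globally asymptotically stable on $\operatorname{int}(\mathbb{R}_+^2)$ for the closed-loop system with $D=\tilde k(c)$, i.e. there exists $\sigma\in\mathcal{KL}$ with $|\ln c(t)|\le\sigma(|\ln c(0)|,t)$ for all closed-loop solutions and $t\ge0$, where $\ln c=(\ln c_1,\ln c_2)'$.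
   Context: $\operatorname{int}(\mathbb{R}_+^2)$ is the open positive quadrant. $\mathcal{KL}$: continuous $\sigma:\mathbb{R}_+^2\to\mathbb{R}_+$ with $\sigma(\cdot,t)$ increasing, $\sigma(0,t)=0$, and $\sigma(s,\cdot)$ non-increasing tending to $0$. *)

theory Defs
  imports "HOL-Analysis.Analysis"
begin

definition quadrant :: "(real \<times> real) set" where
  "quadrant = {x. fst x > 0 \<and> snd x > 0}"

text \<open>C-infinity (smooth) real functions on an open subset of R^2: differentiable,
  with both partial derivatives again smooth (coinductively, i.e. all orders).\<close>
coinductive smooth_on2 :: "(real \<times> real) set \<Rightarrow> (real \<times> real \<Rightarrow> real) \<Rightarrow> bool"
  for S where
  "(\<And>x. x \<in> S \<Longrightarrow> (f has_derivative (\<lambda>h. fst h * g1 x + snd h * g2 x)) (at x))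
   \<Longrightarrow> smooth_on2 S g1 \<Longrightarrow> smooth_on2 S g2 \<Longrightarrow> smooth_on2 S f"

definition KL :: "(real \<Rightarrow> real \<Rightarrow> real) \<Rightarrow> bool" where
  "KL \<sigma> \<longleftrightarrow>
     continuous_on ({0..} \<times> {0..}) (\<lambda>(s, t). \<sigma> s t) \<and>
     (\<forall>s\<ge>0. \<forall>t\<ge>0. \<sigma> s t \<ge> 0) \<and>
     (\<forall>t\<ge>0. \<sigma> 0 t = 0 \<and> strict_mono_on {0..} (\<lambda>s. \<sigma> s t)) \<and>
     (\<forall>s\<ge>0. (\<forall>t1 t2. 0 \<le> t1 \<longrightarrow> t1 \<le> t2 \<longrightarrow> \<sigma> s t2 \<le> \<sigma> s t1) \<and>
             ((\<lambda>t. \<sigma> s t) \<longlongrightarrow> 0) at_top)"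

definition rhs :: "real \<Rightarrow> real \<Rightarrow> real \<Rightarrow> real \<times> real \<Rightarrow> real \<times> real" where
  "rhs \<theta> \<mu> D c =
     (D * (1 + \<theta> - fst c) - \<theta> * fst c * (snd c)\<^sup>2,
      D * (1 - \<mu> * \<theta> - snd c) + \<mu> * \<theta> * fst c * (snd c)\<^sup>2)"

definition lnv :: "real \<times> real \<Rightarrow> real \<times> real" where
  "lnv c = (ln (fst c), ln (snd c))"

end

theory Submission
  imports Defs "HOL-Computational_Algebra.Polynomial" "HOL-Real_Asymp.Real_Asymp"
begin

text \<open>
  For the unbounded feedback D = p := c1 c2^2 the system becomes c_i' = p (1 - c_i), and
  z = \<mu> c1 + c2 always satisfies z' = D (1 + \<mu> - z).  We saturate p smoothly:
  k(c) = sat(c1 c2^2) with sat(y) = y for y below a level P, 0 < sat \<le> Dmax, using the flat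
  function exp(-1/x).  Stability is certified by the maximum V of the three functions
  (ln c1)^2, (ln c2)^2 and (K (z - 1 - \<mu>)^2)^2.  The third one decays at rate 4D everywhere, and the
  gain K is chosen so large that wherever one of the first two is the maximum, the
  saturation is inactive (c1 c2^2 \<le> P), so that component decays as well.  A comparison
  principle for the maximum of finitely many differentiable functions first shows that V
  is nonincreasing along solutions, which confines them to a compact region where D is
  bounded below; a second application then gives exponential decay of V, hence a KL bound.
\<close>

coinductive smooth_real :: "(real \<Rightarrow> real) \<Rightarrow> bool" where
  "(\<And>x. (f has_real_derivative f' x) (at x)) \<Longrightarrow> smooth_real f' \<Longrightarrow> smooth_real f"

lemma smooth_real_deriv:
  assumes "smooth_real f"
  shows "(f has_real_derivative deriv f x) (at x)" and "smooth_real (deriv f)"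
proof -
  from assms obtain f' where f': "\<And>x. (f has_real_derivative f' x) (at x)" "smooth_real f'"
    by (cases rule: smooth_real.cases) auto
  have "deriv f = f'"
    using f'(1) by (auto intro!: DERIV_imp_deriv)
  then show "(f has_real_derivative deriv f x) (at x)" "smooth_real (deriv f)"
    using f' by auto
qed

lemma smooth_real_exp: "smooth_real exp"
proof -
  have "f \<in> {exp} \<Longrightarrow> smooth_real f" for f
    by (coinduction arbitrary: f rule: smooth_real.coinduct) (auto intro: DERIV_exp)
  then show ?thesis by blast
qed

text \<open>The functions p(1/x) exp(-1/x) for x > 0, extended by 0; this class is closed under differentiation.\<close>
definition flat_poly :: "real poly \<Rightarrow> real \<Rightarrow> real" where
  "flat_poly P x = (if 0 < x then poly P (1 / x) * exp (- 1 / x) else 0)"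

lemma poly_times_exp_neg_limit: "((\<lambda>u::real. poly P u * exp (- u)) \<longlongrightarrow> 0) at_top"
proof -
  have "((\<lambda>u. \<Sum>i\<le>degree P. coeff P i * (u ^ i / exp u)) \<longlongrightarrow> (\<Sum>i\<le>degree P. coeff P i * 0)) at_top"
    by (intro tendsto_sum tendsto_mult tendsto_const tendsto_power_div_exp_0)
  then show ?thesis
    by (simp add: poly_altdef sum_divide_distrib exp_minus field_simps)
qed

lemma flat_poly_deriv_zero: "(flat_poly P has_real_derivative 0) (at 0)"
proof -
  have "((\<lambda>y. poly (pCons 0 P) (inverse y) * exp (- inverse y)) \<longlongrightarrow> 0) (at_right 0)"
    using filterlim_compose[OF poly_times_exp_neg_limit filterlim_inverse_at_top_right,
        of "pCons 0 P"]
    by (simp add: o_def)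
  then have right: "((\<lambda>y. (flat_poly P y - flat_poly P 0) / (y - 0)) \<longlongrightarrow> 0) (at_right 0)"
    by (rule tendsto_cong[THEN iffD1, rotated])
      (auto simp: flat_poly_def divide_inverse mult_ac
        intro!: eventually_mono[OF eventually_at_right_less[of 0]])
  have left: "((\<lambda>y. (flat_poly P y - flat_poly P 0) / (y - 0)) \<longlongrightarrow> 0) (at_left 0)"
    by (rule tendsto_cong[THEN iffD1, OF _ tendsto_const])
      (use eventually_at_left_real[where a=0 and b="-1"] in
        \<open>auto simp: flat_poly_def elim!: eventually_mono\<close>)
  show ?thesis
    using filterlim_split_at[OF left right] by (simp add: has_field_derivative_iff)
qed

lemma flat_poly_deriv:
  "(flat_poly P has_real_derivative flat_poly (monom 1 2 * (P - pderiv P)) x) (at x)"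
proof -
  consider "x > 0" | "x < 0" | "x = 0" by linarith
  then show ?thesis
  proof cases
    case 1
    have "((\<lambda>y. poly P (1 / y) * exp (- 1 / y)) has_real_derivative
        poly (pderiv P) (1 / x) * (- 1 / x^2) * exp (- 1 / x) + poly P (1 / x) * (exp (- 1 / x) * (1 / x^2))) (at x)"
      using 1 by (auto intro!: derivative_eq_intros simp: power2_eq_square field_simps)
    then have "((\<lambda>y. poly P (1 / y) * exp (- 1 / y)) has_real_derivative
        flat_poly (monom 1 2 * (P - pderiv P)) x) (at x)"
      using 1 by (simp add: flat_poly_def poly_monom field_simps power2_eq_square)
    then show ?thesis
      by (rule has_field_derivative_transform_within_open[where S="{0<..}"])
        (use 1 in \<open>auto simp: flat_poly_def\<close>)
  next
    case 2
    have "((\<lambda>y. 0) has_real_derivative flat_poly (monom 1 2 * (P - pderiv P)) x) (at x)"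
      using 2 by (simp add: flat_poly_def)
    then show ?thesis
      by (rule has_field_derivative_transform_within_open[where S="{..<0}"])
        (use 2 in \<open>auto simp: flat_poly_def\<close>)
  next
    case 3
    then show ?thesis using flat_poly_deriv_zero by (simp add: flat_poly_def)
  qed
qed

lemma smooth_real_flat_poly: "smooth_real (flat_poly P)"
proof -
  have "f \<in> range flat_poly \<Longrightarrow> smooth_real f" for f
    by (coinduction arbitrary: f rule: smooth_real.coinduct) (auto intro: flat_poly_deriv)
  then show ?thesis by blast
qed

definition flat_step :: "real \<Rightarrow> real" where
  "flat_step x = (if 0 < x then exp (- 1 / x) else 0)"

lemma smooth_real_flat_step: "smooth_real flat_step"
proof -
  have "flat_step = flat_poly 1"
    by (auto simp: flat_step_def flat_poly_def fun_eq_iff)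
  then show ?thesis using smooth_real_flat_poly by metis
qed

lemma flat_step_bounds: "0 \<le> flat_step x" "flat_step x \<le> 1"
  by (simp_all add: flat_step_def)

definition grad :: "(real \<times> real) set \<Rightarrow> (real \<times> real \<Rightarrow> real) \<Rightarrow> (real \<times> real \<Rightarrow> real) \<times> (real \<times> real \<Rightarrow> real)" where
  "grad S f = (SOME (g1, g2). (\<forall>x\<in>S. (f has_derivative (\<lambda>h. fst h * g1 x + snd h * g2 x)) (at x))
                \<and> smooth_on2 S g1 \<and> smooth_on2 S g2)"

lemma smooth_on2_grad:
  assumes "smooth_on2 S f"
  shows "\<And>x. x \<in> S \<Longrightarrow> (f has_derivative (\<lambda>h. fst h * fst (grad S f) x + snd h * snd (grad S f) x)) (at x)"
    and "smooth_on2 S (fst (grad S f))" and "smooth_on2 S (snd (grad S f))"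
proof -
  from assms obtain g1 g2 where
    "\<forall>x\<in>S. (f has_derivative (\<lambda>h. fst h * g1 x + snd h * g2 x)) (at x)" "smooth_on2 S g1" "smooth_on2 S g2"
    by (cases rule: smooth_on2.cases) blast
  then have "\<exists>g. (case g of (g1, g2) \<Rightarrow> (\<forall>x\<in>S. (f has_derivative (\<lambda>h. fst h * g1 x + snd h * g2 x)) (at x))
                \<and> smooth_on2 S g1 \<and> smooth_on2 S g2)"
    by (intro exI[of _ "(g1, g2)"]) simp
  from someI_ex[OF this] show "\<And>x. x \<in> S \<Longrightarrow> (f has_derivative (\<lambda>h. fst h * fst (grad S f) x + snd h * snd (grad S f) x)) (at x)"
    "smooth_on2 S (fst (grad S f))" "smooth_on2 S (snd (grad S f))"
    unfolding grad_def by (auto split: prod.splits)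
qed

lemma smooth_on2_const: "smooth_on2 S (\<lambda>x. a)"
proof -
  have "f \<in> range (\<lambda>a x. a) \<Longrightarrow> smooth_on2 S f" for f
    by (coinduction arbitrary: f rule: smooth_on2.coinduct)
      (auto intro!: exI[of _ "\<lambda>x. 0"] derivative_eq_intros)
  then show ?thesis by blast
qed

lemma smooth_on2_fst: "smooth_on2 S fst"
  by (rule smooth_on2.intros[of S _ "\<lambda>x. 1" "\<lambda>x. 0"])
    (auto intro!: derivative_eq_intros smooth_on2_const)

lemma smooth_on2_snd: "smooth_on2 S snd"
  by (rule smooth_on2.intros[of S _ "\<lambda>x. 0" "\<lambda>x. 1"])
    (auto intro!: derivative_eq_intros smooth_on2_const)

text \<open>Sums of products of smooth functions are smooth: the derivative of such a sum is again
  a sum of products, so the class is closed under differentiation.\<close>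
lemma smooth_on2_sum_prod:
  assumes "\<forall>(f, g)\<in>set L. smooth_on2 S f \<and> smooth_on2 S g"
  shows "smooth_on2 S (\<lambda>x. \<Sum>(f, g)\<leftarrow>L. f x * g x)"
proof -
  define SP where "SP = {F. \<exists>L. (\<forall>(f, g)\<in>set L. smooth_on2 S f \<and> smooth_on2 S g)
                              \<and> F = (\<lambda>x. \<Sum>(f, g)\<leftarrow>L. f x * g x)}"
  define dL where "dL p L = concat (map (\<lambda>(f, g). [(p (grad S f), g), (f, p (grad S g))]) L)"
    for p :: "_ \<times> _ \<Rightarrow> real \<times> real \<Rightarrow> real" and L :: "((real \<times> real \<Rightarrow> real) \<times> _) list"
  have dL_smooth: "\<forall>(f, g)\<in>set (dL p L). smooth_on2 S f \<and> smooth_on2 S g"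
    if "\<forall>(f, g)\<in>set L. smooth_on2 S f \<and> smooth_on2 S g" "p = fst \<or> p = snd" for p L
    using that by (auto simp: dL_def smooth_on2_grad)
  have dL_deriv: "((\<lambda>x. \<Sum>(f, g)\<leftarrow>L. f x * g x) has_derivative
      (\<lambda>h. fst h * (\<Sum>(f, g)\<leftarrow>dL fst L. f x * g x) + snd h * (\<Sum>(f, g)\<leftarrow>dL snd L. f x * g x))) (at x)"
    if "\<forall>(f, g)\<in>set L. smooth_on2 S f \<and> smooth_on2 S g" "x \<in> S" for L x
    using that(1)
  proof (induction L)
    case Nil
    then show ?case by (simp add: dL_def)
  next
    case (Cons fg L)
    obtain f g where fg: "fg = (f, g)" by fastforce
    have "smooth_on2 S f" "smooth_on2 S g" using Cons.prems fg by auto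
    from has_derivative_add[OF has_derivative_mult[OF smooth_on2_grad(1)[OF this(1) \<open>x \<in> S\<close>]
          smooth_on2_grad(1)[OF this(2) \<open>x \<in> S\<close>]] Cons.IH] Cons.prems
    show ?case
      by (simp add: fg dL_def) (simp add: algebra_simps)
  qed
  have "F \<in> SP \<Longrightarrow> smooth_on2 S F" for F
  proof (coinduction arbitrary: F rule: smooth_on2.coinduct)
    case (smooth_on2 F)
    then obtain L where L: "\<forall>(f, g)\<in>set L. smooth_on2 S f \<and> smooth_on2 S g"
      and F: "F = (\<lambda>x. \<Sum>(f, g)\<leftarrow>L. f x * g x)"
      by (auto simp: SP_def)
    let ?d = "\<lambda>p x. \<Sum>(f, g)\<leftarrow>dL p L. f x * g x"
    have "?d fst \<in> SP" "?d snd \<in> SP"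
      using dL_smooth[OF L] unfolding SP_def by blast+
    then show ?case
      using dL_deriv[OF L] by (intro exI[of _ F] exI[of _ "?d fst"] exI[of _ "?d snd"]) (auto simp: F)
  qed
  then show ?thesis using assms by (auto simp: SP_def)
qed

lemma smooth_on2_mult: "smooth_on2 S f \<Longrightarrow> smooth_on2 S g \<Longrightarrow> smooth_on2 S (\<lambda>x. f x * g x)"
  using smooth_on2_sum_prod[of "[(f, g)]"] by simp

lemma smooth_on2_add: "smooth_on2 S f \<Longrightarrow> smooth_on2 S g \<Longrightarrow> smooth_on2 S (\<lambda>x. f x + g x)"
  using smooth_on2_sum_prod[of "[(f, \<lambda>x. 1), (g, \<lambda>x. 1)]"] by (simp add: smooth_on2_const)

text \<open>Chain rule: a smooth function of one variable composed with a smooth function of two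
  variables is smooth.  The derivatives are sums of terms h (g x) * f x with h and f smooth.\<close>
lemma smooth_on2_compose:
  assumes h: "smooth_real h" and g: "smooth_on2 S g"
  shows "smooth_on2 S (\<lambda>x. h (g x))"
proof -
  define CP where "CP = {F. \<exists>L. (\<forall>(h, f)\<in>set L. smooth_real h \<and> smooth_on2 S f)
                              \<and> F = (\<lambda>x. \<Sum>(h, f)\<leftarrow>L. h (g x) * f x)}"
  define dL where "dL p L = concat (map (\<lambda>(h, f). [(deriv h, \<lambda>x. p (grad S g) x * f x), (h, p (grad S f))]) L)"
    for p :: "_ \<times> _ \<Rightarrow> real \<times> real \<Rightarrow> real" and L :: "((real \<Rightarrow> real) \<times> _) list"
  have dL_smooth: "\<forall>(h, f)\<in>set (dL p L). smooth_real h \<and> smooth_on2 S f"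
    if "\<forall>(h, f)\<in>set L. smooth_real h \<and> smooth_on2 S f" "p = fst \<or> p = snd" for p L
    using that g by (auto simp: dL_def smooth_on2_grad smooth_real_deriv intro!: smooth_on2_mult)
  have dL_deriv: "((\<lambda>x. \<Sum>(h, f)\<leftarrow>L. h (g x) * f x) has_derivative
      (\<lambda>q. fst q * (\<Sum>(h, f)\<leftarrow>dL fst L. h (g x) * f x) + snd q * (\<Sum>(h, f)\<leftarrow>dL snd L. h (g x) * f x))) (at x)"
    if "\<forall>(h, f)\<in>set L. smooth_real h \<and> smooth_on2 S f" "x \<in> S" for L x
    using that(1)
  proof (induction L)
    case Nil
    then show ?case by (simp add: dL_def)
  next
    case (Cons hf L)
    obtain h f where hf: "hf = (h, f)" by fastforce
    have hf_smooth: "smooth_real h" "smooth_on2 S f" using Cons.prems hf by auto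
    have "((\<lambda>x. h (g x)) has_derivative
        (\<lambda>q. (fst q * fst (grad S g) x + snd q * snd (grad S g) x) * deriv h (g x))) (at x)"
      by (rule DERIV_compose_FDERIV[OF smooth_real_deriv(1)[OF hf_smooth(1)] smooth_on2_grad(1)[OF g \<open>x \<in> S\<close>]])
    from has_derivative_add[OF has_derivative_mult[OF this smooth_on2_grad(1)[OF hf_smooth(2) \<open>x \<in> S\<close>]] Cons.IH]
      Cons.prems
    show ?case
      by (simp add: hf dL_def) (simp add: algebra_simps)
  qed
  have "F \<in> CP \<Longrightarrow> smooth_on2 S F" for F
  proof (coinduction arbitrary: F rule: smooth_on2.coinduct)
    case (smooth_on2 F)
    then obtain L where L: "\<forall>(h, f)\<in>set L. smooth_real h \<and> smooth_on2 S f"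
      and F: "F = (\<lambda>x. \<Sum>(h, f)\<leftarrow>L. h (g x) * f x)"
      by (auto simp: CP_def)
    let ?d = "\<lambda>p x. \<Sum>(h, f)\<leftarrow>dL p L. h (g x) * f x"
    have "?d fst \<in> CP" "?d snd \<in> CP"
      using dL_smooth[OF L] unfolding CP_def by blast+
    then show ?case
      using dL_deriv[OF L] by (intro exI[of _ F] exI[of _ "?d fst"] exI[of _ "?d snd"]) (auto simp: F)
  qed
  moreover have "(\<lambda>x. h (g x)) \<in> CP"
    using h by (auto simp: CP_def smooth_on2_const intro!: exI[of _ "[(h, \<lambda>x. 1)]"])
  ultimately show ?thesis by blast
qed

lemma sq_ge_imp_abs_ge: "x\<^sup>2 \<ge> y\<^sup>2 \<Longrightarrow> 0 \<le> y \<Longrightarrow> \<bar>x\<bar> \<ge> y" for x y :: real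
  by (metis abs_le_square_iff abs_of_nonneg)

lemma abs_exp_minus_one_le: "\<bar>exp x - 1\<bar> \<le> exp \<bar>x\<bar> - 1" for x :: real
proof (cases "x \<ge> 0")
  case False
  have "(exp x - 1)\<^sup>2 \<ge> 0" by simp
  then have "exp x * exp x + 1 \<ge> 2 * exp x" by (simp add: power2_eq_square algebra_simps)
  then have "exp x + exp (- x) \<ge> 2" by (simp add: exp_minus field_simps)
  then show ?thesis using False by simp
qed simp

lemma has_vector_derivative_components:
  assumes "(c has_vector_derivative v) F"
  shows "((\<lambda>t. fst (c t)) has_real_derivative fst v) F" "((\<lambda>t. snd (c t)) has_real_derivative snd v) F"
  unfolding has_field_derivative_def
  using has_derivative_fst[OF assms[unfolded has_vector_derivative_def]]
    has_derivative_snd[OF assms[unfolded has_vector_derivative_def]]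
  by (auto elim!: has_derivative_eq_rhs simp: fun_eq_iff)

lemma eventually_less_right_of_neg_deriv:
  fixes g :: "real \<Rightarrow> real"
  assumes "(g has_real_derivative D) (at_right s)" "D < 0"
  shows "eventually (\<lambda>u. g u < g s) (at_right s)"
proof -
  have "eventually (\<lambda>u. (g u - g s) / (u - s) < 0) (at_right s)"
    using assms by (intro order_tendstoD) (simp_all add: has_field_derivative_iff)
  then show ?thesis
    using eventually_at_right_less[of s]
    by eventually_elim (simp add: divide_less_0_iff)
qed

lemma le_at_left_limit:
  fixes f :: "real \<Rightarrow> real"
  assumes cont: "continuous_on {a..<b} f" and s: "a < s" "s < b"
    and below: "\<And>u. a \<le> u \<Longrightarrow> u < s \<Longrightarrow> f u \<le> M"
  shows "f s \<le> M"
proof -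
  have "(f \<longlongrightarrow> f s) (at s within {a..<b})"
    using cont s by (simp add: continuous_on_def)
  then have "(f \<longlongrightarrow> f s) (at s within {a..s})"
    by (rule tendsto_within_subset) (use s in auto)
  then have "(f \<longlongrightarrow> f s) (at_left s)"
    using s by (simp add: at_within_Icc_at_left)
  moreover have "eventually (\<lambda>u. f u \<le> M) (at_left s)"
    using eventually_at_left_real[OF s(1)] by eventually_elim (auto intro: below)
  ultimately show ?thesis
    by (rule tendsto_upperbound) (simp add: trivial_limit_at_left_real)
qed

lemma continuous_right_nonincreasing:
  fixes f :: "real \<Rightarrow> real"
  assumes cont: "continuous_on {a..<b} f"
    and right: "\<And>s. s \<in> {a..<b} \<Longrightarrow> eventually (\<lambda>u. f u \<le> f s) (at_right s)"
    and t: "t \<in> {a..<b}"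
  shows "f t \<le> f a"
proof -
  define S where "S = {r \<in> {a..t}. \<forall>u\<in>{a..r}. f u \<le> f a}"
  define s where "s = Sup S"
  have "a \<in> S" using t by (auto simp: S_def)
  have bdd: "bdd_above S" by (auto simp: S_def bdd_above_def)
  have as: "a \<le> s" unfolding s_def using \<open>a \<in> S\<close> bdd by (rule cSup_upper)
  have st: "s \<le> t" unfolding s_def using \<open>a \<in> S\<close> by (intro cSup_least) (auto simp: S_def)
  have below: "f u \<le> f a" if "a \<le> u" "u < s" for u
  proof -
    from less_cSupD[of S u] that \<open>a \<in> S\<close> obtain r where "r \<in> S" "u < r"
      unfolding s_def by blast
    then show ?thesis using that by (auto simp: S_def)
  qed
  have fs: "f s \<le> f a"
  proof (cases "s = a")
    case False
    then show ?thesis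
      using le_at_left_limit[OF cont _ _ below] as st t by auto
  qed simp
  have "\<not> s < t"
  proof
    assume "s < t"
    then have "s \<in> {a..<b}" using as t by auto
    from right[OF this] have "eventually (\<lambda>u. f u \<le> f a) (at_right s)"
      by (rule eventually_mono) (use fs in simp)
    then obtain e where e: "e > s" "\<And>u. s < u \<Longrightarrow> u < e \<Longrightarrow> f u \<le> f a"
      by (auto simp: eventually_at_right_field)
    define r where "r = (s + min e t) / 2"
    have "f u \<le> f a" if "u \<in> {a..r}" for u
    proof -
      consider "u < s" | "u = s" | "s < u" by linarith
      then show ?thesis
        using that below fs e(2)[of u] e(1) \<open>s < t\<close> by cases (auto simp: r_def)
    qed
    then have "r \<in> S"
      using as e(1) \<open>s < t\<close> by (auto simp: S_def r_def)
    then have "r \<le> s" unfolding s_def using bdd by (rule cSup_upper)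
    then show False using e \<open>s < t\<close> by (simp add: r_def)
  qed
  then have "s = t" using st by simp
  then show ?thesis using fs by simp
qed

lemma continuous_on_Max_family:
  fixes g :: "'i \<Rightarrow> real \<Rightarrow> real"
  assumes "finite I" "I \<noteq> {}" "\<And>i. i \<in> I \<Longrightarrow> continuous_on A (g i)"
  shows "continuous_on A (\<lambda>t. MAX i\<in>I. g i t)"
  using assms
proof (induction I rule: finite_ne_induct)
  case (insert i I)
  then show ?case
    by (simp add: image_insert[symmetric] del: image_insert) (auto intro!: continuous_on_max)
qed simp

lemma max_family_nonincreasing:
  fixes g g' :: "'i \<Rightarrow> real \<Rightarrow> real"
  assumes I: "finite I" "I \<noteq> {}"
    and deriv: "\<And>i t. i \<in> I \<Longrightarrow> t \<in> {a..<b} \<Longrightarrow> (g i has_real_derivative g' i t) (at t within {a..<b})"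
    and active: "\<And>i t. i \<in> I \<Longrightarrow> t \<in> {a..<b} \<Longrightarrow> g i t = (MAX j\<in>I. g j t) \<Longrightarrow> g' i t < 0"
    and t: "t \<in> {a..<b}"
  shows "(MAX i\<in>I. g i t) \<le> (MAX i\<in>I. g i a)"
proof (rule continuous_right_nonincreasing[OF _ _ t])
  have cont: "continuous_on {a..<b} (g i)" if "i \<in> I" for i
    using deriv[OF that] by (meson DERIV_continuous continuous_on_eq_continuous_within)
  then show "continuous_on {a..<b} (\<lambda>t. MAX i\<in>I. g i t)"
    using I by (rule continuous_on_Max_family[rotated 2])
  fix s assume s: "s \<in> {a..<b}"
  define c where "c = (s + b) / 2"
  have sub: "{s..c} \<subseteq> {a..<b}" and right: "at s within {s..c} = at_right s"
    using s by (auto simp: c_def at_within_Icc_at_right)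
  have "eventually (\<lambda>u. g i u \<le> (MAX j\<in>I. g j s)) (at_right s)" if i: "i \<in> I" for i
  proof (cases "g i s = (MAX j\<in>I. g j s)")
    case True
    have "(g i has_real_derivative g' i s) (at_right s)"
      using has_field_derivative_subset[OF deriv[OF i s] sub] by (simp add: right)
    from eventually_less_right_of_neg_deriv[OF this active[OF i s True]]
    show ?thesis by eventually_elim (simp add: True)
  next
    case False
    then have less: "g i s < (MAX j\<in>I. g j s)" using I i by (simp add: order_less_le)
    have "(g i \<longlongrightarrow> g i s) (at s within {s..c})"
      using cont[OF i] s sub by (auto simp: continuous_on_def intro: tendsto_within_subset)
    then have "(g i \<longlongrightarrow> g i s) (at_right s)" by (simp add: right)
    from order_tendstoD(2)[OF this less] show ?thesis by eventually_elim simp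
  qed
  then have "eventually (\<lambda>u. \<forall>i\<in>I. g i u \<le> (MAX j\<in>I. g j s)) (at_right s)"
    using I(1) by (intro eventually_ball_finite) auto
  then show "eventually (\<lambda>u. (MAX i\<in>I. g i u) \<le> (MAX i\<in>I. g i s)) (at_right s)"
    by eventually_elim (simp add: I)
qed

lemma Max_family_affine:
  fixes g :: "'i \<Rightarrow> real"
  assumes "finite I" "I \<noteq> {}" "k > 0"
  shows "(MAX i\<in>I. g i * k - d) = (MAX i\<in>I. g i) * k - d"
proof -
  have "mono (\<lambda>x. x * k - d)" using assms(3) by (auto intro: monoI)
  from mono_Max_commute[OF this, of "g ` I"] assms(1,2) show ?thesis
    by (simp add: image_image)
qed

text \<open>Apply the strict version to
  g i t * exp (r t) - e t and let e tend to 0.\<close>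
lemma max_family_exp_decay:
  fixes g g' :: "'i \<Rightarrow> real \<Rightarrow> real"
  assumes I: "finite I" "I \<noteq> {}"
    and deriv: "\<And>i t. i \<in> I \<Longrightarrow> t \<in> {0..<T} \<Longrightarrow> (g i has_real_derivative g' i t) (at t within {0..<T})"
    and active: "\<And>i t. i \<in> I \<Longrightarrow> t \<in> {0..<T} \<Longrightarrow> g i t = (MAX j\<in>I. g j t) \<Longrightarrow> g' i t \<le> - r * g i t"
    and t: "t \<in> {0..<T}"
  shows "(MAX i\<in>I. g i t) \<le> (MAX i\<in>I. g i 0) * exp (- r * t)"
proof -
  have perturbed: "(MAX i\<in>I. g i t) * exp (r * t) - e * t \<le> (MAX i\<in>I. g i 0)" if e: "e > 0" for e
  proof -
    define h where "h i s = g i s * exp (r * s) - e * s" for i s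
    have Max_h: "(MAX i\<in>I. h i s) = (MAX i\<in>I. g i s) * exp (r * s) - e * s" for s
      unfolding h_def using I by (simp add: Max_family_affine)
    have "(MAX i\<in>I. h i t) \<le> (MAX i\<in>I. h i 0)"
    proof (rule max_family_nonincreasing[OF I _ _ t])
      fix i s assume i: "i \<in> I" and s: "s \<in> {0..<T}"
      show "(h i has_real_derivative (g' i s + r * g i s) * exp (r * s) - e) (at s within {0..<T})"
        unfolding h_def using deriv[OF i s] by (auto intro!: derivative_eq_intros simp: algebra_simps)
      assume "h i s = (MAX j\<in>I. h j s)"
      then have "g i s * exp (r * s) = (MAX j\<in>I. g j s) * exp (r * s)"
        unfolding Max_h by (simp add: h_def)
      then have "g i s = (MAX j\<in>I. g j s)" by simp
      from active[OF i s this] have "(g' i s + r * g i s) * exp (r * s) \<le> 0"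
        by (intro mult_nonpos_nonneg) auto
      then show "(g' i s + r * g i s) * exp (r * s) - e < 0"
        using e by linarith
    qed
    moreover have "(MAX i\<in>I. h i 0) = (MAX i\<in>I. g i 0)" by (simp add: h_def)
    ultimately show ?thesis by (simp only: Max_h)
  qed
  have "(MAX i\<in>I. g i t) * exp (r * t) \<le> (MAX i\<in>I. g i 0)"
  proof (rule field_le_epsilon)
    fix e :: real assume "e > 0"
    then have "e / (t + 1) > 0" "e / (t + 1) * t \<le> e" using t by (auto simp: field_simps)
    with perturbed[of "e / (t + 1)"] show "(MAX i\<in>I. g i t) * exp (r * t) \<le> (MAX i\<in>I. g i 0) + e"
      by linarith
  qed
  then have "(MAX i\<in>I. g i t) * exp (r * t) * exp (- r * t) \<le> (MAX i\<in>I. g i 0) * exp (- r * t)"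
    by (simp add: mult_right_mono)
  then show ?thesis by (simp add: mult.assoc exp_add[symmetric])
qed

text \<open>The system with parameters satisfying the hypotheses actually used by the construction:
  positivity of \<theta> and \<mu>, and Dmax above the square of the equilibrium value 1 + \<mu> of z.\<close>
locale chemostat =
  fixes \<theta> \<mu> Dmax :: real
  assumes \<theta>_pos: "\<theta> > 0" and \<mu>_pos: "\<mu> > 0" and Dmax_large: "Dmax > (1 + \<mu>)\<^sup>2"
begin

text \<open>Constants of the construction: z_eq is the equilibrium value of z = \<mu> c1 + c2; the
  feedback equals c1 c2^2 below sat_level; z_tol and gain enforce that saturation is
  inactive where ln c1 or ln c2 dominates; sat_rate calibrates the saturation to Dmax.\<close>
definition z_eq :: real where "z_eq = 1 + \<mu>"
definition margin :: real where "margin = (Dmax - z_eq\<^sup>2) / 2"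
definition sat_level :: real where "sat_level = z_eq\<^sup>2 + margin"
definition z_tol :: real where "z_tol = min 1 (z_eq * margin / (3 * z_eq\<^sup>2 + 3 * z_eq + 1))"
definition gain :: real where "gain = (z_eq\<^sup>2 / margin + 1) / sat_level + (z_tol + \<mu>) / z_tol\<^sup>2 + 1"
definition sat_rate :: real where "sat_rate = exp (1 / margin) / Dmax"

lemma z_eq_gt_1: "z_eq > 1" using \<mu>_pos by (simp add: z_eq_def)

lemma margin_pos: "margin > 0" using Dmax_large by (simp add: margin_def z_eq_def)

lemma Dmax_eq: "Dmax = sat_level + margin" by (simp add: sat_level_def margin_def)

lemma Dmax_pos: "Dmax > 0" using le_less_trans[OF zero_le_power2 Dmax_large] .

lemma sat_rate_pos: "sat_rate > 0" using Dmax_pos by (simp add: sat_rate_def)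

lemma sat_level_gt: "sat_level > z_eq\<^sup>2" "sat_level > 1"
proof -
  show "sat_level > z_eq\<^sup>2" using margin_pos by (simp add: sat_level_def)
  moreover have "1 < z_eq * z_eq" using z_eq_gt_1 less_1_mult by blast
  ultimately show "sat_level > 1" by (simp add: power2_eq_square)
qed

lemma z_tol_pos: "z_tol > 0"
  using z_eq_gt_1 margin_pos unfolding z_tol_def by (auto intro!: divide_pos_pos add_pos_pos)

lemma z_tol_le_1: "z_tol \<le> 1" by (simp add: z_tol_def)

text \<open>Choice of z_tol: values of z within z_tol of z_eq keep c1 c2^2 below sat_level.\<close>
lemma z_tol_cube: "(z_eq + z_tol) ^ 3 \<le> z_eq * sat_level"
proof -
  have "3 * z_eq\<^sup>2 + 3 * z_eq + 1 > 0" using z_eq_gt_1 by (simp add: add_pos_pos)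
  moreover have "z_tol \<le> z_eq * margin / (3 * z_eq\<^sup>2 + 3 * z_eq + 1)" by (simp add: z_tol_def)
  ultimately have "z_tol * (3 * z_eq\<^sup>2 + 3 * z_eq + 1) \<le> z_eq * margin"
    by (simp add: field_simps)
  moreover have "z_tol\<^sup>2 \<le> z_tol" "z_tol ^ 3 \<le> z_tol"
    using z_tol_pos z_tol_le_1 by (simp_all add: power2_eq_square power3_eq_cube mult_le_one)
  moreover have "z_eq * z_tol\<^sup>2 \<le> z_eq * z_tol"
    using calculation(2) z_eq_gt_1 by (simp add: mult_left_mono)
  moreover have "(z_eq + z_tol) ^ 3 = z_eq ^ 3 + 3 * z_eq\<^sup>2 * z_tol + 3 * z_eq * z_tol\<^sup>2 + z_tol ^ 3"
    by (simp add: power2_eq_square power3_eq_cube algebra_simps)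
  moreover have "z_eq * sat_level = z_eq ^ 3 + z_eq * margin"
    by (simp add: sat_level_def power2_eq_square power3_eq_cube algebra_simps)
  ultimately show ?thesis by (simp add: algebra_simps)
qed

lemma gain_pos: "gain > 0"
proof -
  have "z_eq\<^sup>2 / margin + 1 > 0" using margin_pos by (simp add: add_nonneg_pos)
  then show ?thesis
    using sat_level_gt z_tol_pos \<mu>_pos unfolding gain_def by (intro add_pos_pos) auto
qed

text \<open>Choice of gain: the two inequalities through which it enters the saturation arguments.\<close>
lemma quadratic_below_gain:
  assumes "z > 0"
  shows "z\<^sup>2 \<le> sat_level * (1 + gain * (z - z_eq)\<^sup>2)"
proof (cases "z \<le> z_eq")
  case True
  then have "z\<^sup>2 \<le> z_eq\<^sup>2" using assms by (simp add: power_mono)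
  moreover have "sat_level * (gain * (z - z_eq)\<^sup>2) \<ge> 0" using sat_level_gt gain_pos by simp
  ultimately show ?thesis using sat_level_gt by (simp add: algebra_simps)
next
  case False
  define t where "t = z - z_eq"
  have z: "z = z_eq + t" by (simp add: t_def)
  have "2 * z_eq * t \<le> margin + z_eq\<^sup>2 * t\<^sup>2 / margin"
  proof -
    have "0 \<le> (margin - z_eq * t)\<^sup>2" by simp
    then have "2 * z_eq * t * margin \<le> margin\<^sup>2 + z_eq\<^sup>2 * t\<^sup>2" by (simp add: power2_eq_square algebra_simps)
    then show ?thesis using margin_pos by (simp add: field_simps power2_eq_square)
  qed
  then have "z\<^sup>2 \<le> z_eq\<^sup>2 + margin + (z_eq\<^sup>2 / margin + 1) * t\<^sup>2"
    unfolding z by (simp add: power2_eq_square algebra_simps)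
  also have "z_eq\<^sup>2 / margin + 1 \<le> sat_level * gain"
  proof -
    have "sat_level * gain = z_eq\<^sup>2 / margin + 1 + sat_level * ((z_tol + \<mu>) / z_tol\<^sup>2 + 1)"
      using sat_level_gt by (simp add: gain_def field_simps)
    moreover have "sat_level * ((z_tol + \<mu>) / z_tol\<^sup>2 + 1) \<ge> 0"
      using sat_level_gt z_tol_pos \<mu>_pos by simp
    ultimately show ?thesis by simp
  qed
  then have "z_eq\<^sup>2 + margin + (z_eq\<^sup>2 / margin + 1) * t\<^sup>2 \<le> sat_level + sat_level * gain * t\<^sup>2"
    by (simp add: sat_level_def mult_right_mono)
  finally show ?thesis by (simp add: t_def algebra_simps)
qed

lemma linear_below_gain:
  assumes "t \<ge> z_tol"
  shows "gain * t\<^sup>2 > \<mu> + t"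
proof -
  have t: "t > 0" using assms z_tol_pos by simp
  have "gain > (z_tol + \<mu>) / z_tol\<^sup>2"
    using margin_pos sat_level_gt z_eq_gt_1 unfolding gain_def by (simp add: add_pos_pos)
  then have "gain * z_tol > (z_tol + \<mu>) / z_tol" using z_tol_pos by (simp add: field_simps power2_eq_square)
  then have "gain * z_tol - 1 > \<mu> / z_tol" using z_tol_pos by (simp add: field_simps)
  then have "(gain * z_tol - 1) * t > \<mu> / z_tol * t" by (rule mult_strict_right_mono[OF _ t])
  moreover have "\<mu> / z_tol * t \<ge> \<mu>" using assms z_tol_pos \<mu>_pos by (simp add: field_simps)
  moreover have "gain * t\<^sup>2 \<ge> gain * z_tol * t" using assms gain_pos t by (simp add: power2_eq_square)
  ultimately show ?thesis by (simp add: algebra_simps)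
qed

definition sat :: "real \<Rightarrow> real" where
  "sat y = y * exp (- (sat_rate * y * flat_step (y - sat_level)))"

definition feedback :: "real \<times> real \<Rightarrow> real" where
  "feedback c = sat (fst c * (snd c)\<^sup>2)"

lemma sat_unsaturated: "y \<le> sat_level \<Longrightarrow> sat y = y"
  by (simp add: sat_def flat_step_def)

lemma sat_pos: "y > 0 \<Longrightarrow> sat y > 0"
  by (simp add: sat_def)

lemma sat_le: assumes "y > 0" shows "sat y \<le> y"
proof -
  have "sat_rate * y * flat_step (y - sat_level) \<ge> 0"
    using sat_rate_pos assms flat_step_bounds by simp
  then show ?thesis using assms unfolding sat_def by (simp add: mult_left_le)
qed

text \<open>For y > Dmax the flat step is at least exp (-1/margin), and y exp (-y/Dmax) \<le> Dmax.\<close>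
lemma sat_le_Dmax: assumes y: "y > 0" shows "sat y \<le> Dmax"
proof (cases "y \<le> Dmax")
  case True
  then show ?thesis using sat_le[OF y] by simp
next
  case False
  then have "y - sat_level > margin" using Dmax_eq by simp
  then have "flat_step (y - sat_level) \<ge> exp (- 1 / margin)"
    using margin_pos by (simp add: flat_step_def field_simps)
  then have "sat_rate * y * flat_step (y - sat_level) \<ge> sat_rate * y * exp (- 1 / margin)"
    using sat_rate_pos y by (simp add: mult_left_mono)
  also have "sat_rate * y * exp (- 1 / margin) = y / Dmax"
    unfolding sat_rate_def using Dmax_pos by (simp add: exp_minus field_simps)
  finally have "sat y \<le> y * exp (- (y / Dmax))"
    unfolding sat_def using y by (simp add: mult_left_mono)
  also have "\<dots> = Dmax * (y / Dmax / exp (y / Dmax))"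
    using Dmax_pos by (simp add: exp_minus field_simps)
  also have "\<dots> \<le> Dmax * 1"
  proof -
    have "y / Dmax \<le> exp (y / Dmax)" using exp_ge_add_one_self[of "y / Dmax"] by linarith
    then have "y / Dmax / exp (y / Dmax) \<le> 1" by (subst divide_le_eq_1_pos) auto
    then show ?thesis using Dmax_pos by (intro mult_left_mono) auto
  qed
  finally show ?thesis by simp
qed

lemma sat_lower:
  assumes "exp (- r) \<le> y" "y \<le> exp r"
  shows "sat y \<ge> exp (- r) * exp (- (sat_rate * exp r))"
proof -
  have y: "y > 0" using assms(1) by (smt (verit) exp_gt_zero)
  have "sat_rate * y * flat_step (y - sat_level) \<le> sat_rate * exp r * 1"
    using sat_rate_pos y assms(2) flat_step_bounds by (intro mult_mono) auto
  then have "exp (- (sat_rate * y * flat_step (y - sat_level))) \<ge> exp (- (sat_rate * exp r))"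
    by simp
  then show ?thesis unfolding sat_def using assms(1) y by (intro mult_mono) auto
qed

lemma feedback_smooth: "smooth_on2 S feedback"
proof -
  have feedback_expr: "feedback = (\<lambda>c. (fst c * (snd c * snd c)) *
          exp ((- sat_rate) * ((fst c * (snd c * snd c)) * flat_step (fst c * (snd c * snd c) + (- sat_level)))))"
    by (auto simp: feedback_def sat_def power2_eq_square fun_eq_iff)
  show ?thesis
    unfolding feedback_expr
    by (intro smooth_on2_mult smooth_on2_compose[OF smooth_real_exp] smooth_on2_compose[OF smooth_real_flat_step]
        smooth_on2_add smooth_on2_const smooth_on2_fst smooth_on2_snd)
qed

lemma feedback_range: "c \<in> quadrant \<Longrightarrow> feedback c \<in> {0..Dmax}"
  unfolding feedback_def quadrant_def using sat_pos sat_le_Dmax by (auto intro!: less_imp_le)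

lemma feedback_equilibrium: "feedback (1, 1) = 1"
  using sat_level_gt by (simp add: feedback_def sat_unsaturated)

lemma feedback_bounds: "c1 > 0 \<Longrightarrow> c2 > 0 \<Longrightarrow> 0 < feedback (c1, c2) \<and> feedback (c1, c2) \<le> c1 * c2\<^sup>2"
  by (simp add: feedback_def sat_pos sat_le)

definition closed_loop :: "real \<times> real \<Rightarrow> real \<times> real" where
  "closed_loop c = rhs \<theta> \<mu> (feedback c) c"

lemma closed_loop_mix:
  "\<mu> * fst (closed_loop c) + snd (closed_loop c) = feedback c * (z_eq - (\<mu> * fst c + snd c))"
  by (simp add: closed_loop_def rhs_def z_eq_def algebra_simps)

lemma closed_loop_unsaturated:
  assumes "c1 * c2\<^sup>2 \<le> sat_level"
  shows "closed_loop (c1, c2) = (c1 * c2\<^sup>2 * (1 - c1), c1 * c2\<^sup>2 * (1 - c2))"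
  using assms by (simp add: closed_loop_def rhs_def feedback_def sat_unsaturated algebra_simps)

definition lyap_mix :: "real \<times> real \<Rightarrow> real" where
  "lyap_mix c = (gain * (\<mu> * fst c + snd c - z_eq)\<^sup>2)\<^sup>2"

lemma unsaturated_c1:
  assumes c: "c1 > 0" "c2 > 0" "c1 < 1" and dom: "(ln c1)\<^sup>2 \<ge> lyap_mix (c1, c2)"
  shows "c1 * c2\<^sup>2 \<le> sat_level"
proof -
  define z where "z = \<mu> * c1 + c2"
  have z: "z > 0" "c2 < z" using c \<mu>_pos by (auto simp: z_def add_pos_pos)
  have "\<bar>ln c1\<bar> \<ge> gain * (z - z_eq)\<^sup>2"
    using dom gain_pos unfolding lyap_mix_def z_def by (intro sq_ge_imp_abs_ge) auto
  moreover have "\<bar>ln c1\<bar> = - ln c1" using c by simp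
  ultimately have "ln c1 \<le> - (gain * (z - z_eq)\<^sup>2)" by simp
  then have "c1 \<le> exp (- (gain * (z - z_eq)\<^sup>2))"
    using c by (metis exp_le_cancel_iff exp_ln)
  then have "c1 * c2\<^sup>2 \<le> exp (- (gain * (z - z_eq)\<^sup>2)) * z\<^sup>2"
    using c z by (intro mult_mono power_mono) auto
  also have "\<dots> \<le> sat_level"
  proof -
    have "z\<^sup>2 \<le> sat_level * (1 + gain * (z - z_eq)\<^sup>2)" by (rule quadratic_below_gain[OF z(1)])
    also have "\<dots> \<le> sat_level * exp (gain * (z - z_eq)\<^sup>2)"
      using sat_level_gt by (simp add: exp_ge_add_one_self add.commute)
    finally show ?thesis by (simp add: exp_minus field_simps)
  qed
  finally show ?thesis .
qed

lemma z_close_where_c2_dominates: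
  assumes c: "c1 > 0" "c2 > 1" and dom: "(ln c2)\<^sup>2 \<ge> lyap_mix (c1, c2)"
  shows "\<mu> * c1 + c2 < z_eq + z_tol"
proof -
  define z where "z = \<mu> * c1 + c2"
  have z: "z > 0" "c2 < z" using c \<mu>_pos by (auto simp: z_def add_pos_pos)
  have ln_c2: "ln c2 > 0" using c by simp
  have "\<bar>ln c2\<bar> \<ge> gain * (z - z_eq)\<^sup>2"
    using dom gain_pos unfolding lyap_mix_def z_def by (intro sq_ge_imp_abs_ge) auto
  then have "gain * (z - z_eq)\<^sup>2 \<le> ln c2" using ln_c2 by simp
  also have "\<dots> < ln z" using z c by simp
  also have "\<dots> \<le> z - 1" using z(1) by (rule ln_le_minus_one)
  finally have "gain * (z - z_eq)\<^sup>2 < \<mu> + (z - z_eq)" by (simp add: z_eq_def)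
  then show ?thesis
    using linear_below_gain[of "z - z_eq"] by (fastforce simp: z_def)
qed

text \<open>If c1 \<le> c2 and z is within z_tol of z_eq, then c1 c2^2 \<le> (z_eq + z_tol)^3 / z_eq \<le> sat_level.\<close>
lemma unsaturated_near_z_eq:
  assumes c: "0 < c1" "c1 \<le> c2" and z_close: "\<mu> * c1 + c2 < z_eq + z_tol"
  shows "c1 * c2\<^sup>2 \<le> sat_level"
proof -
  define z where "z = \<mu> * c1 + c2"
  have z: "z > 0" "c2 < z" using c \<mu>_pos by (auto simp: z_def add_pos_pos)
  have "c1 * c2\<^sup>2 \<le> (z_eq + z_tol) ^ 3 / z_eq"
  proof (cases "c1 \<le> 1")
    case True
    have "c1 * c2\<^sup>2 \<le> 1 * (z_eq + z_tol)\<^sup>2"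
      using c z z_close True by (intro mult_mono power_mono) (auto simp: z_def)
    also have "\<dots> \<le> (z_eq + z_tol) ^ 3 / z_eq"
    proof -
      have "z_eq * (z_eq + z_tol)\<^sup>2 \<le> (z_eq + z_tol) * (z_eq + z_tol)\<^sup>2"
        using z_tol_pos z_eq_gt_1 by (intro mult_right_mono) auto
      then show ?thesis using z_eq_gt_1 by (simp add: field_simps power2_eq_square power3_eq_cube)
    qed
    finally show ?thesis by simp
  next
    case False
    have "z_eq * c1 \<le> z" using c by (simp add: z_eq_def z_def algebra_simps)
    then have "c1 \<le> z / z_eq" using z_eq_gt_1 by (simp add: field_simps)
    then have "c1 * c2\<^sup>2 \<le> (z / z_eq) * z\<^sup>2" using c z by (intro mult_mono power_mono) auto
    also have "\<dots> = z ^ 3 / z_eq" by (simp add: power2_eq_square power3_eq_cube)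
    also have "\<dots> \<le> (z_eq + z_tol) ^ 3 / z_eq"
      using z_close z z_eq_gt_1 by (intro divide_right_mono power_mono) (auto simp: z_def)
    finally show ?thesis .
  qed
  also have "\<dots> \<le> sat_level" using z_tol_cube z_eq_gt_1 by (simp add: field_simps)
  finally show ?thesis .
qed

lemma unsaturated_c2:
  assumes c: "c1 > 0" "c2 > 1"
    and dom: "(ln c2)\<^sup>2 \<ge> (ln c1)\<^sup>2" "(ln c2)\<^sup>2 \<ge> lyap_mix (c1, c2)"
  shows "c1 * c2\<^sup>2 \<le> sat_level"
proof (rule unsaturated_near_z_eq)
  have "\<bar>ln c2\<bar> \<ge> \<bar>ln c1\<bar>" using dom(1) by (simp add: abs_le_square_iff)
  moreover have "ln c2 > 0" using c by simp
  ultimately have "ln c1 \<le> ln c2" by linarith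
  then show "c1 \<le> c2" using c by simp
  show "\<mu> * c1 + c2 < z_eq + z_tol" by (rule z_close_where_c2_dominates[OF c dom(2)])
qed (use c in simp)

text \<open>Decay of (ln c1)^2 for c1 \<ge> 1: the feedback only enters through k \<le> c1 c2^2.\<close>
lemma decay_c1_large:
  assumes c: "c1 \<ge> 1" "c2 > 0"
  shows "2 * ln c1 * (fst (closed_loop (c1, c2)) / c1) \<le> - 2 * feedback (c1, c2) * exp (- \<bar>ln c1\<bar>) * (ln c1)\<^sup>2"
proof -
  define x where "x = ln c1"
  define D where "D = feedback (c1, c2)"
  have x: "x \<ge> 0" "x \<le> c1 - 1" using c by (simp_all add: x_def ln_le_minus_one)
  have D: "D > 0" "D \<le> c1 * c2\<^sup>2" using feedback_bounds[of c1 c2] c by (simp_all add: D_def)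
  have "fst (closed_loop (c1, c2)) \<le> D * (1 - c1)"
    using D \<theta>_pos by (simp add: closed_loop_def rhs_def D_def algebra_simps)
  also have "\<dots> \<le> D * (- x)" using D x by (intro mult_left_mono) auto
  finally have "2 * x * (fst (closed_loop (c1, c2)) / c1) \<le> 2 * x * (D * (- x) / c1)"
    using x c by (intro mult_left_mono divide_right_mono) auto
  also have "\<dots> = - 2 * D * exp (- \<bar>x\<bar>) * x\<^sup>2"
    using c x by (simp add: x_def exp_minus power2_eq_square field_simps)
  finally show ?thesis by (simp add: x_def D_def)
qed

text \<open>Decay of (ln c1)^2 for c1 \<le> 1 below the saturation level, where c1' = c1 c2^2 (1 - c1).\<close>
lemma decay_c1_unsaturated:
  assumes c: "0 < c1" "c1 \<le> 1" "c2 > 0" and unsat: "c1 * c2\<^sup>2 \<le> sat_level"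
  shows "2 * ln c1 * (fst (closed_loop (c1, c2)) / c1) \<le> - 2 * feedback (c1, c2) * exp (- \<bar>ln c1\<bar>) * (ln c1)\<^sup>2"
proof -
  define x where "x = ln c1"
  define p where "p = c1 * c2\<^sup>2"
  have x: "x \<le> 0" using c by (simp add: x_def)
  have p: "p > 0" using c by (simp add: p_def)
  have D: "feedback (c1, c2) = p" using unsat by (simp add: p_def feedback_def sat_unsaturated)
  have "2 * x * (fst (closed_loop (c1, c2)) / c1) = 2 * x * p * (1 / c1 - 1)"
    using c unsat by (simp add: p_def closed_loop_unsaturated field_simps)
  also have "\<dots> \<le> 2 * x * p * (- x)"
  proof -
    have "ln (1 / c1) \<le> 1 / c1 - 1" using c by (intro ln_le_minus_one) auto
    then have "- x \<le> 1 / c1 - 1" using c by (simp add: x_def ln_div)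
    moreover have "2 * x * p \<le> 0" using x p by (simp add: mult_nonpos_nonneg)
    ultimately show ?thesis by (rule mult_left_mono_neg)
  qed
  also have "\<dots> \<le> - 2 * p * exp (- \<bar>x\<bar>) * x\<^sup>2"
  proof -
    have "exp (- \<bar>x\<bar>) * x\<^sup>2 \<le> x\<^sup>2" by (rule mult_left_le_one_le) auto
    then have "p * exp (- \<bar>x\<bar>) * x\<^sup>2 \<le> p * x\<^sup>2" using p by (simp add: mult_left_mono mult.assoc)
    then show ?thesis by (simp add: power2_eq_square algebra_simps)
  qed
  finally show ?thesis by (simp add: x_def D)
qed

text \<open>Decay of (ln c2)^2 for c2 \<le> 1: the feedback only enters through k \<le> c1 c2^2.\<close>
lemma decay_c2_small:
  assumes c: "c1 > 0" "0 < c2" "c2 \<le> 1"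
  shows "2 * ln c2 * (snd (closed_loop (c1, c2)) / c2) \<le> - 2 * feedback (c1, c2) * exp (- \<bar>ln c2\<bar>) * (ln c2)\<^sup>2"
proof -
  define x where "x = ln c2"
  define D where "D = feedback (c1, c2)"
  have x: "x \<le> 0" using c by (simp add: x_def)
  have D: "D > 0" "D \<le> c1 * c2\<^sup>2" using feedback_bounds[of c1 c2] c by (simp_all add: D_def)
  have "snd (closed_loop (c1, c2)) \<ge> D * (1 - c2)"
    using D \<theta>_pos \<mu>_pos by (simp add: closed_loop_def rhs_def D_def algebra_simps)
  then have "2 * x * (snd (closed_loop (c1, c2)) / c2) \<le> 2 * x * (D * (1 - c2) / c2)"
    using x c by (intro mult_left_mono_neg divide_right_mono) auto
  also have "\<dots> \<le> 2 * x * (D * (- x))"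
  proof -
    have "ln (1 / c2) \<le> 1 / c2 - 1" using c by (intro ln_le_minus_one) auto
    then have "- x \<le> 1 / c2 - 1" using c by (simp add: x_def ln_div)
    then have "D * (- x) \<le> D * (1 / c2 - 1)" using D by (intro mult_left_mono) auto
    also have "D * (1 / c2 - 1) = D * (1 - c2) / c2" using c by (simp add: field_simps)
    finally show ?thesis using x by (intro mult_left_mono_neg) auto
  qed
  also have "\<dots> \<le> - 2 * D * exp (- \<bar>x\<bar>) * x\<^sup>2"
  proof -
    have "exp (- \<bar>x\<bar>) * x\<^sup>2 \<le> x\<^sup>2" by (rule mult_left_le_one_le) auto
    then have "D * exp (- \<bar>x\<bar>) * x\<^sup>2 \<le> D * x\<^sup>2" using D by (simp add: mult_left_mono mult.assoc)
    then show ?thesis by (simp add: power2_eq_square algebra_simps)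
  qed
  finally show ?thesis by (simp add: x_def D_def)
qed

text \<open>Decay of (ln c2)^2 for c2 \<ge> 1 below the saturation level, where c2' = c1 c2^2 (1 - c2).\<close>
lemma decay_c2_unsaturated:
  assumes c: "c1 > 0" "c2 \<ge> 1" and unsat: "c1 * c2\<^sup>2 \<le> sat_level"
  shows "2 * ln c2 * (snd (closed_loop (c1, c2)) / c2) \<le> - 2 * feedback (c1, c2) * exp (- \<bar>ln c2\<bar>) * (ln c2)\<^sup>2"
proof -
  define x where "x = ln c2"
  define p where "p = c1 * c2\<^sup>2"
  have x: "x \<ge> 0" "x \<le> c2 - 1" using c by (simp_all add: x_def ln_le_minus_one)
  have p: "p > 0" using c by (simp add: p_def)
  have D: "feedback (c1, c2) = p" using unsat by (simp add: p_def feedback_def sat_unsaturated)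
  have "snd (closed_loop (c1, c2)) = p * (1 - c2)"
    using unsat by (simp add: p_def closed_loop_unsaturated)
  also have "\<dots> \<le> p * (- x)" using p x by (intro mult_left_mono) auto
  finally have "2 * x * (snd (closed_loop (c1, c2)) / c2) \<le> 2 * x * (p * (- x) / c2)"
    using x c by (intro mult_left_mono divide_right_mono) auto
  also have "\<dots> = - 2 * p * exp (- \<bar>x\<bar>) * x\<^sup>2"
    using c x by (simp add: x_def exp_minus power2_eq_square field_simps)
  finally show ?thesis by (simp add: x_def D)
qed

lemma decay_c1:
  assumes c: "c1 > 0" "c2 > 0"
    and dom: "(ln c1)\<^sup>2 \<ge> (ln c2)\<^sup>2" "(ln c1)\<^sup>2 \<ge> lyap_mix (c1, c2)"
  shows "2 * ln c1 * (fst (closed_loop (c1, c2)) / c1) \<le> - 2 * feedback (c1, c2) * exp (- \<bar>ln c1\<bar>) * (ln c1)\<^sup>2"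
proof (cases "c1 \<ge> 1")
  case True
  then show ?thesis using c(2) by (rule decay_c1_large)
next
  case False
  then show ?thesis
    using c decay_c1_unsaturated unsaturated_c1[OF c _ dom(2)] by simp
qed

lemma decay_c2:
  assumes c: "c1 > 0" "c2 > 0"
    and dom: "(ln c2)\<^sup>2 \<ge> (ln c1)\<^sup>2" "(ln c2)\<^sup>2 \<ge> lyap_mix (c1, c2)"
  shows "2 * ln c2 * (snd (closed_loop (c1, c2)) / c2) \<le> - 2 * feedback (c1, c2) * exp (- \<bar>ln c2\<bar>) * (ln c2)\<^sup>2"
proof (cases "c2 \<le> 1")
  case True
  then show ?thesis using c by (intro decay_c2_small) auto
next
  case False
  then show ?thesis
    using c decay_c2_unsaturated unsaturated_c2[OF c(1) _ dom] by simp
qed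

definition lyap :: "nat \<Rightarrow> real \<times> real \<Rightarrow> real" where
  "lyap i c = (if i = 0 then (ln (fst c))\<^sup>2 else if i = 1 then (ln (snd c))\<^sup>2 else lyap_mix c)"

definition lyap_deriv :: "nat \<Rightarrow> real \<times> real \<Rightarrow> real" where
  "lyap_deriv i c =
     (if i = 0 then 2 * ln (fst c) * (fst (closed_loop c) / fst c)
      else if i = 1 then 2 * ln (snd c) * (snd (closed_loop c) / snd c)
      else - 4 * feedback c * lyap_mix c)"

lemma lyap_nonneg: "lyap i c \<ge> 0"
  by (simp add: lyap_def lyap_mix_def)

lemma norm_lnv_sq: "(norm (lnv c))\<^sup>2 = lyap 0 c + lyap 1 c"
  by (simp add: lnv_def lyap_def norm_Pair)

lemma lyap_decrease:
  assumes c: "c \<in> quadrant" and i: "i \<in> {0, 1, 2}"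
    and active: "lyap i c = (MAX j\<in>{0, 1, 2}. lyap j c)"
  shows "lyap_deriv i c \<le> - 2 * (feedback c * exp (- norm (lnv c))) * lyap i c"
proof -
  obtain c1 c2 where c12: "c = (c1, c2)" "c1 > 0" "c2 > 0"
    using c by (cases c) (auto simp: quadrant_def)
  have dom: "lyap j c \<le> lyap i c" if "j \<in> {0, 1, 2}" for j
    using that unfolding active by (intro Max_ge) auto
  have D: "feedback c > 0" using feedback_bounds[OF c12(2,3)] c12(1) by simp
  have exp_norm: "exp (- norm (lnv c)) \<le> exp (- \<bar>ln c1\<bar>)" "exp (- norm (lnv c)) \<le> exp (- \<bar>ln c2\<bar>)"
    by (simp_all add: c12 lnv_def norm_Pair)
  consider "i = 0" | "i = 1" | "i = 2" using i by blast
  then show ?thesis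
  proof cases
    case 1
    have "lyap_deriv i c \<le> - 2 * feedback c * exp (- \<bar>ln c1\<bar>) * (ln c1)\<^sup>2"
      using decay_c1[OF c12(2,3)] dom[of 1] dom[of 2] by (simp add: 1 c12 lyap_def lyap_deriv_def)
    also have "\<dots> \<le> - 2 * (feedback c * exp (- norm (lnv c))) * (ln c1)\<^sup>2"
      using exp_norm(1) D by (simp add: mult_left_mono mult_right_mono)
    finally show ?thesis by (simp add: 1 c12 lyap_def)
  next
    case 2
    have "lyap_deriv i c \<le> - 2 * feedback c * exp (- \<bar>ln c2\<bar>) * (ln c2)\<^sup>2"
      using decay_c2[OF c12(2,3)] dom[of 0] dom[of 2] by (simp add: 2 c12 lyap_def lyap_deriv_def)
    also have "\<dots> \<le> - 2 * (feedback c * exp (- norm (lnv c))) * (ln c2)\<^sup>2"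
      using exp_norm(2) D by (simp add: mult_left_mono mult_right_mono)
    finally show ?thesis by (simp add: 2 c12 lyap_def)
  next
    case 3
    have "exp (- norm (lnv c)) \<le> 2" by (rule order_trans[of _ 1]) auto
    then have "feedback c * exp (- norm (lnv c)) * lyap_mix c \<le> feedback c * 2 * lyap_mix c"
      using D lyap_nonneg[of 2 c] by (intro mult_right_mono mult_left_mono) (auto simp: lyap_def)
    then show ?thesis by (simp add: 3 lyap_def lyap_deriv_def mult_ac)
  qed
qed

lemma lyap_has_derivative:
  assumes c: "c t \<in> quadrant" and deriv: "(c has_vector_derivative closed_loop (c t)) (at t within X)"
  shows "((\<lambda>s. lyap i (c s)) has_real_derivative lyap_deriv i (c t)) (at t within X)"
proof -
  have pos: "fst (c t) > 0" "snd (c t) > 0" using c by (auto simp: quadrant_def)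
  note d = has_vector_derivative_components[OF deriv]
  define g where "g s = \<mu> * fst (c s) + snd (c s) - z_eq" for s
  have "\<mu> * fst (closed_loop (c t)) + snd (closed_loop (c t)) = - feedback (c t) * g t"
    using closed_loop_mix[of "c t"] by (simp add: g_def algebra_simps)
  moreover have "(g has_real_derivative \<mu> * fst (closed_loop (c t)) + snd (closed_loop (c t))) (at t within X)"
    unfolding g_def by (auto intro!: derivative_eq_intros d)
  ultimately have dg: "(g has_real_derivative - feedback (c t) * g t) (at t within X)"
    by simp
  have mix_eq: "lyap_mix (c s) = (gain * (g s)\<^sup>2)\<^sup>2" for s
    by (simp add: lyap_mix_def g_def)
  have deriv_eq: "2 * (gain * (g t)\<^sup>2) * (gain * (2 * g t * (- feedback (c t) * g t)))
      = - 4 * feedback (c t) * (gain * (g t)\<^sup>2)\<^sup>2"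
    by (simp add: power2_eq_square algebra_simps)
  have "((\<lambda>s. (gain * (g s)\<^sup>2)\<^sup>2) has_real_derivative
      2 * (gain * (g t)\<^sup>2) * (gain * (2 * g t * (- feedback (c t) * g t)))) (at t within X)"
    by (rule derivative_eq_intros dg refl)+ simp
  then have mix: "((\<lambda>s. lyap_mix (c s)) has_real_derivative - 4 * feedback (c t) * lyap_mix (c t))
      (at t within X)"
    unfolding deriv_eq mix_eq .
  show ?thesis
  proof (cases "i = 0 \<or> i = 1")
    case True
    then show ?thesis
      using pos unfolding lyap_def lyap_deriv_def by (auto intro!: derivative_eq_intros d simp: field_simps)
  next
    case False
    then show ?thesis using mix by (simp add: lyap_def lyap_deriv_def)
  qed
qed

definition lyap_max :: "real \<times> real \<Rightarrow> real" where
  "lyap_max c = (MAX i\<in>{0, 1, 2}. lyap i c)"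

lemma lyap_le_max: "i \<in> {0, 1, 2} \<Longrightarrow> lyap i c \<le> lyap_max c"
  unfolding lyap_max_def by (intro Max_ge) auto

lemma norm_lnv_le_lyap_max: "norm (lnv c) \<le> sqrt (2 * lyap_max c)"
proof -
  have "(norm (lnv c))\<^sup>2 \<le> 2 * lyap_max c"
    using norm_lnv_sq[of c] lyap_le_max[of 0 c] lyap_le_max[of 1 c] by simp
  then show ?thesis by (simp add: real_le_rsqrt)
qed

text \<open>A lower bound for the decay rate on the set |ln c| \<le> r.\<close>
definition decay_rate :: "real \<Rightarrow> real" where
  "decay_rate r = exp (- 4 * r - sat_rate * exp (3 * r))"

lemma decay_rate_pos: "decay_rate r > 0"
  by (simp add: decay_rate_def)

lemma decay_rate_antimono:
  assumes "r \<le> r'"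
  shows "decay_rate r' \<le> decay_rate r"
proof -
  have "sat_rate * exp (3 * r) \<le> sat_rate * exp (3 * r')"
    using assms sat_rate_pos by (intro mult_left_mono) auto
  then show ?thesis using assms by (simp add: decay_rate_def)
qed

lemma feedback_rate_lower:
  assumes c: "c \<in> quadrant" and r: "norm (lnv c) \<le> r"
  shows "feedback c * exp (- norm (lnv c)) \<ge> decay_rate r"
proof -
  obtain c1 c2 where c12: "c = (c1, c2)" "c1 > 0" "c2 > 0"
    using c by (cases c) (auto simp: quadrant_def)
  have ln_bounds: "\<bar>ln c1\<bar> \<le> r" "\<bar>ln c2\<bar> \<le> r"
    using r by (simp_all add: c12 lnv_def norm_Pair) (meson order_trans real_sqrt_ge_abs1 real_sqrt_ge_abs2)+
  have "2 * ln c2 = ln (c2\<^sup>2)" using c12 by (simp add: ln_realpow)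
  then have "c1 * c2\<^sup>2 = exp (ln c1 + 2 * ln c2)"
    using c12 by (simp add: exp_add)
  then have "exp (- (3 * r)) \<le> c1 * c2\<^sup>2" "c1 * c2\<^sup>2 \<le> exp (3 * r)"
    using ln_bounds by auto
  from sat_lower[OF this]
  have "feedback c \<ge> exp (- (3 * r)) * exp (- (sat_rate * exp (3 * r)))"
    by (simp add: c12 feedback_def)
  moreover have "exp (- norm (lnv c)) \<ge> exp (- r)" using r by simp
  ultimately have "feedback c * exp (- norm (lnv c)) \<ge>
      exp (- (3 * r)) * exp (- (sat_rate * exp (3 * r))) * exp (- r)"
    using feedback_bounds[OF c12(2,3)] c12(1) by (intro mult_mono) auto
  then show ?thesis
    by (simp add: decay_rate_def mult_exp_exp algebra_simps)
qed

definition solution :: "real \<Rightarrow> (real \<Rightarrow> real \<times> real) \<Rightarrow> bool" where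
  "solution T c \<longleftrightarrow>
     (\<forall>t\<in>{0..<T}. c t \<in> quadrant \<and> (c has_vector_derivative closed_loop (c t)) (at t within {0..<T}))"

lemma lyap_max_decay:
  assumes sol: "solution T c" and t: "t \<in> {0..<T}"
    and rate: "\<And>s. s \<in> {0..<T} \<Longrightarrow> r \<le> 2 * (feedback (c s) * exp (- norm (lnv (c s))))"
  shows "lyap_max (c t) \<le> lyap_max (c 0) * exp (- r * t)"
  unfolding lyap_max_def
proof (rule max_family_exp_decay[where g="\<lambda>i s. lyap i (c s)" and g'="\<lambda>i s. lyap_deriv i (c s)"])
  fix i :: nat and s :: real
  assume i: "i \<in> {0, 1, 2}" and s: "s \<in> {0..<T}"
  have quad: "c s \<in> quadrant" and deriv: "(c has_vector_derivative closed_loop (c s)) (at s within {0..<T})"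
    using sol s by (auto simp: solution_def)
  show "((\<lambda>s. lyap i (c s)) has_real_derivative lyap_deriv i (c s)) (at s within {0..<T})"
    using quad deriv by (rule lyap_has_derivative)
  assume "lyap i (c s) = (MAX j\<in>{0, 1, 2}. lyap j (c s))"
  note decrease = lyap_decrease[OF quad i this]
  have "r * lyap i (c s) \<le> 2 * (feedback (c s) * exp (- norm (lnv (c s)))) * lyap i (c s)"
    using rate[OF s] lyap_nonneg by (rule mult_right_mono)
  with decrease show "lyap_deriv i (c s) \<le> - r * lyap i (c s)"
    by linarith
qed (use t in auto)

text \<open>Two applications: with r = 0 the solution stays in |ln c| \<le> \<rho>, where the rate is at least
  decay_rate \<rho>; this gives exponential decay of |ln c|.\<close>
lemma closed_loop_decay:
  assumes sol: "solution T c" and t: "t \<in> {0..<T}"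
  defines "\<rho> \<equiv> sqrt (2 * lyap_max (c 0))"
  shows "norm (lnv (c t)) \<le> \<rho> * exp (- decay_rate \<rho> * t)"
proof -
  have quad: "c s \<in> quadrant" if "s \<in> {0..<T}" for s
    using sol that by (simp add: solution_def)
  have bounded: "norm (lnv (c s)) \<le> \<rho>" if s: "s \<in> {0..<T}" for s
  proof -
    have "lyap_max (c s) \<le> lyap_max (c 0) * exp (- 0 * s)"
      using feedback_range[OF quad] by (intro lyap_max_decay[OF sol s]) auto
    then show ?thesis
      using norm_lnv_le_lyap_max[of "c s"] by (simp add: \<rho>_def order_trans)
  qed
  have "lyap_max (c t) \<le> lyap_max (c 0) * exp (- (2 * decay_rate \<rho>) * t)"
    using feedback_rate_lower[OF quad bounded] by (intro lyap_max_decay[OF sol t]) auto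
  then have "norm (lnv (c t)) \<le> sqrt (2 * (lyap_max (c 0) * exp (- (2 * decay_rate \<rho>) * t)))"
    using norm_lnv_le_lyap_max[of "c t"] by (meson mult_left_mono order_trans real_sqrt_le_mono zero_le_numeral)
  also have "\<dots> = \<rho> * exp (- decay_rate \<rho> * t)"
  proof -
    have "exp (- (2 * decay_rate \<rho>) * t) = (exp (- decay_rate \<rho> * t))\<^sup>2"
      by (simp add: power2_eq_square exp_add[symmetric])
    then show ?thesis by (simp add: \<rho>_def real_sqrt_mult)
  qed
  finally show ?thesis .
qed

text \<open>The initial value of the Lyapunov function is bounded by a class-K function of |ln c(0)|.\<close>
definition size_bound :: "real \<Rightarrow> real" where
  "size_bound s = sqrt 2 * (s + gain * z_eq\<^sup>2 * (exp s - 1)\<^sup>2)"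

lemma lyap_max_initial:
  assumes c: "c \<in> quadrant"
  shows "sqrt (2 * lyap_max c) \<le> size_bound (norm (lnv c))"
proof -
  obtain c1 c2 where c12: "c = (c1, c2)" "c1 > 0" "c2 > 0"
    using c by (cases c) (auto simp: quadrant_def)
  define s where "s = norm (lnv c)"
  define b where "b = s + gain * z_eq\<^sup>2 * (exp s - 1)\<^sup>2"
  have ln_bounds: "\<bar>ln c1\<bar> \<le> s" "\<bar>ln c2\<bar> \<le> s"
    by (simp_all add: s_def c12 lnv_def norm_Pair)
  have b: "s \<le> b" "0 \<le> s" using gain_pos by (simp_all add: b_def s_def)
  have dev: "\<bar>c1 - 1\<bar> \<le> exp s - 1" "\<bar>c2 - 1\<bar> \<le> exp s - 1"
    using abs_exp_minus_one_le[of "ln c1"] abs_exp_minus_one_le[of "ln c2"] ln_bounds c12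
    by (smt (verit) exp_le_cancel_iff exp_ln)+
  have "\<bar>\<mu> * c1 + c2 - z_eq\<bar> = \<bar>\<mu> * (c1 - 1) + (c2 - 1)\<bar>"
    by (simp add: z_eq_def algebra_simps)
  also have "\<dots> \<le> \<mu> * \<bar>c1 - 1\<bar> + \<bar>c2 - 1\<bar>"
    using \<mu>_pos by (simp add: abs_triangle_ineq[THEN order_trans] abs_mult)
  also have "\<dots> \<le> \<mu> * (exp s - 1) + (exp s - 1)"
    using dev \<mu>_pos by (intro add_mono mult_left_mono) auto
  finally have "\<bar>\<mu> * c1 + c2 - z_eq\<bar> \<le> z_eq * (exp s - 1)"
    by (simp add: z_eq_def algebra_simps)
  then have "(\<mu> * c1 + c2 - z_eq)\<^sup>2 \<le> (z_eq * (exp s - 1))\<^sup>2"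
    by (metis abs_ge_zero power2_abs power_mono)
  then have "gain * (\<mu> * c1 + c2 - z_eq)\<^sup>2 \<le> gain * z_eq\<^sup>2 * (exp s - 1)\<^sup>2"
    using gain_pos by (simp add: power_mult_distrib mult.assoc)
  then have "gain * (\<mu> * c1 + c2 - z_eq)\<^sup>2 \<le> b"
    using b by (simp add: b_def)
  then have "lyap_mix c \<le> b\<^sup>2"
    unfolding lyap_mix_def c12 using gain_pos by (intro power_mono) auto
  moreover have "(ln c1)\<^sup>2 \<le> b\<^sup>2" "(ln c2)\<^sup>2 \<le> b\<^sup>2"
    using ln_bounds b by (metis abs_ge_zero order.trans power2_abs power_mono)+
  ultimately have "lyap_max c \<le> b\<^sup>2"
    by (simp add: lyap_max_def lyap_def c12)
  then have "sqrt (2 * lyap_max c) \<le> sqrt (2 * b\<^sup>2)" by simp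
  also have "\<dots> = size_bound s" using b by (simp add: size_bound_def b_def real_sqrt_mult)
  finally show ?thesis by (simp add: s_def)
qed

lemma size_bound_nonneg: "0 \<le> s \<Longrightarrow> 0 \<le> size_bound s"
  using gain_pos by (simp add: size_bound_def)

lemma size_bound_strict_mono:
  assumes "0 \<le> s" "s < s'"
  shows "size_bound s < size_bound s'"
proof -
  have "(exp s - 1)\<^sup>2 \<le> (exp s' - 1)\<^sup>2" using assms by (intro power_mono) auto
  then have "gain * z_eq\<^sup>2 * (exp s - 1)\<^sup>2 \<le> gain * z_eq\<^sup>2 * (exp s' - 1)\<^sup>2"
    using gain_pos by (intro mult_left_mono) auto
  then show ?thesis using assms by (simp add: size_bound_def)
qed

definition sigma :: "real \<Rightarrow> real \<Rightarrow> real" where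
  "sigma s t = size_bound s * exp (- decay_rate (size_bound s) * t)"

lemma closed_loop_bound:
  assumes sol: "solution T c" and t: "t \<in> {0..<T}"
  shows "norm (lnv (c t)) \<le> sigma (norm (lnv (c 0))) t"
proof -
  define \<rho> where "\<rho> = sqrt (2 * lyap_max (c 0))"
  define b where "b = size_bound (norm (lnv (c 0)))"
  have "c 0 \<in> quadrant" using sol t by (simp add: solution_def)
  then have \<rho>: "0 \<le> \<rho>" "\<rho> \<le> b"
    using lyap_max_initial lyap_nonneg[of 0 "c 0"] lyap_le_max[of 0 "c 0"]
    by (auto simp: \<rho>_def b_def)
  have "norm (lnv (c t)) \<le> \<rho> * exp (- decay_rate \<rho> * t)"
    using closed_loop_decay[OF sol t] by (simp add: \<rho>_def)
  also have "\<dots> \<le> b * exp (- decay_rate b * t)"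
  proof -
    have "decay_rate b * t \<le> decay_rate \<rho> * t"
      using decay_rate_antimono[OF \<rho>(2)] t by (intro mult_right_mono) auto
    then show ?thesis using \<rho> by (intro mult_mono) auto
  qed
  finally show ?thesis by (simp add: sigma_def b_def)
qed

lemma KL_sigma: "KL sigma"
proof -
  have "continuous_on ({0..} \<times> {0..}) (\<lambda>(s, t). sigma s t)"
    unfolding sigma_def size_bound_def decay_rate_def case_prod_beta by (intro continuous_intros)
  moreover have "sigma s t \<ge> 0" if "s \<ge> 0" for s t
    using size_bound_nonneg[OF that] by (simp add: sigma_def)
  moreover have "sigma 0 t = 0" for t by (simp add: sigma_def size_bound_def)
  moreover have "strict_mono_on {0..} (\<lambda>s. sigma s t)" if t: "t \<ge> 0" for t
  proof (rule strict_mono_onI)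
    fix r s :: real assume "r \<in> {0..}" "s \<in> {0..}" "r < s"
    then have r: "0 \<le> r" and less: "size_bound r < size_bound s"
      using size_bound_strict_mono by auto
    have "decay_rate (size_bound s) * t \<le> decay_rate (size_bound r) * t"
      using decay_rate_antimono less t by (intro mult_right_mono) auto
    then have "size_bound r * exp (- decay_rate (size_bound r) * t)
        \<le> size_bound r * exp (- decay_rate (size_bound s) * t)"
      using size_bound_nonneg[OF r] by (intro mult_left_mono) auto
    also have "\<dots> < size_bound s * exp (- decay_rate (size_bound s) * t)"
      using less by simp
    finally show "sigma r t < sigma s t" by (simp add: sigma_def)
  qed
  moreover have "sigma s t2 \<le> sigma s t1" if "s \<ge> 0" "0 \<le> t1" "t1 \<le> t2" for s t1 t2
  proof -
    have "decay_rate (size_bound s) * t1 \<le> decay_rate (size_bound s) * t2"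
      using that decay_rate_pos by (intro mult_left_mono) (auto intro: less_imp_le)
    then show ?thesis
      using size_bound_nonneg[OF that(1)] by (simp add: sigma_def mult_left_mono)
  qed
  moreover have "((\<lambda>t. sigma s t) \<longlongrightarrow> 0) at_top" for s
  proof -
    have "((\<lambda>t. exp (- decay_rate (size_bound s) * t)) \<longlongrightarrow> 0) at_top"
      using decay_rate_pos[of "size_bound s"] by real_asymp
    then show ?thesis
      using tendsto_mult_left[of _ 0 at_top "size_bound s"] by (simp add: sigma_def)
  qed
  ultimately show ?thesis unfolding KL_def by blast
qed

end

text \<open>The feedback of the locale chemostat is the required controller and sigma the required
  KL function.\<close>
theorem mainTheorem9:
  fixes \<theta> \<mu> Dmax :: real
  assumes "\<theta> > 0" and "0 < \<mu>" and "\<mu> < 1 / \<theta>"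
    and "Dmax > (1 + \<mu>)\<^sup>2"
    and "Dmax > (1 + \<mu>) * (\<theta> * (1 + \<mu>)\<^sup>2 + 1) / (\<mu> * \<theta>)"
  shows "\<exists>k :: real \<times> real \<Rightarrow> real.
           smooth_on2 quadrant k \<and>
           (\<forall>x\<in>quadrant. k x \<in> {0..Dmax}) \<and>
           k (1, 1) = 1 \<and>
           (\<exists>\<sigma>. KL \<sigma> \<and>
              (\<forall>T > 0. \<forall>c :: real \<Rightarrow> real \<times> real.
                 (\<forall>t\<in>{0..<T}. c t \<in> quadrant \<and>
                    (c has_vector_derivative rhs \<theta> \<mu> (k (c t)) (c t)) (at t within {0..<T}))
                 \<longrightarrow> (\<forall>t\<in>{0..<T}. norm (lnv (c t)) \<le> \<sigma> (norm (lnv (c 0))) t)))"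
proof -
  interpret chemostat \<theta> \<mu> Dmax
    using assms by unfold_locales auto
  have "solution T c"
    if "\<forall>t\<in>{0..<T}. c t \<in> quadrant \<and>
          (c has_vector_derivative rhs \<theta> \<mu> (feedback (c t)) (c t)) (at t within {0..<T})" for T c
    using that by (simp add: solution_def closed_loop_def)
  then have "\<forall>T > 0. \<forall>c :: real \<Rightarrow> real \<times> real.
      (\<forall>t\<in>{0..<T}. c t \<in> quadrant \<and>
         (c has_vector_derivative rhs \<theta> \<mu> (feedback (c t)) (c t)) (at t within {0..<T}))
      \<longrightarrow> (\<forall>t\<in>{0..<T}. norm (lnv (c t)) \<le> sigma (norm (lnv (c 0))) t)"
    using closed_loop_bound by blast
  then show ?thesis
    using feedback_smooth feedback_range feedback_equilibrium KL_sigma by blast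
qed

end
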